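(* Let $I\subset(0,\infty)$ be an interval and let $f:I\to\mathbb{R}$ be differentiable on the interior $I^\circ$ of $I$. Let $m\in(0,1]$, $\alpha\in[0,1]$, $q\ge 1$ and $\theta>0$, and let $a,b$ be real numbers with $a<b$ and $a,\,b/m\in I^\circ$, such that $f'\in L[a,b]$. Suppose that $|f'|^q$ is harmonically $(\alpha,m)$-convex on $[a,b/m]$. Then $$\left|I_f(g;\theta,a,b)\right|\le \frac{ab(b-a)}{2}\,C_1(\theta;a,b)^{1-1/q}\left[C_2(\theta;\alpha;a,b)\,|f'(a)|^q+m\,C_3(\theta;\alpha;a,b)\,|f'(b/m)|^q\right]^{1/q},$$ where $$C_1(\theta;a,b)=\frac{b^{-2}}{\theta+1}\left[{}_2F_1\!\left(2,\theta+1;\theta+2;1-\tfrac{a}{b}\right)+{}_2F_1\!\left(2,1;\theta+2;1-\tfrac{a}{b}\right)\right],$$ $$C_2(\theta;\alpha;a,b)=\frac{\beta(\theta+1,\alpha+1)}{b^{2}}\,{}_2F_1\!\left(2,\theta+1;\theta+\alpha+2;1-\tfrac{a}{b}\right)+\frac{b^{-2}}{\theta+\alpha+1}\,{}_2F_1\!\left(2,1;\theta+\alpha+2;1-\tfrac{a}{b}\right),$$ $$C_3(\theta;\alpha;a,b)=C_1(\theta;a,b)-C_2(\theta;\alpha;a,b).$$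
   Context: A function $h:J\to\mathbb{R}$ on an interval $J\subset(0,\infty)$ is called harmonically $(\alpha,m)$-convex (with $\alpha\in[0,1]$, $m\in(0,1]$) if $h\left(\frac{mxy}{mty+(1-t)x}\right)\le t^{\alpha}h(x)+m(1-t^{\alpha})h(y)$ for all $x,y\in J$ and $t\in[0,1]$ (for which the left-hand side is defined, i.e. the argument lies in $J$). For $\varphi\in L[c,d]$ and $\theta>0$ the Riemann–Liouville integrals are $J^{\theta}_{c+}\varphi(x)=\frac{1}{\Gamma(\theta)}\int_c^x (x-t)^{\theta-1}\varphi(t)\,dt$ for $x>c$ and $J^{\theta}_{d-}\varphi(x)=\frac{1}{\Gamma(\theta)}\int_x^d (t-x)^{\theta-1}\varphi(t)\,dt$ for $x<d$, where $\Gamma$ is the Euler Gamma function. With $g(x)=1/x$, define $$I_f(g;\theta,a,b)=\frac{f(a)+f(b)}{2}-\frac{\Gamma(\theta+1)}{2}\left(\frac{ab}{b-a}\right)^{\theta}\left\{J^{\theta}_{1/a-}(f\circ g)(1/b)+J^{\theta}_{1/b+}(f\circ g)(1/a)\right\}.$$ $\beta(x,y)=\int_0^1 t^{x-1}(1-t)^{y-1}dt$ ($x,y>0$) is the Beta function, and the hypergeometric function is ${}_2F_1(a,b;c;z)=\frac{1}{\beta(b,c-b)}\int_0^1 t^{b-1}(1-t)^{c-b-1}(1-zt)^{-a}dt$ for $c>b>0$, $|z|<1$. *)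

theory Defs
  imports "HOL-Analysis.Analysis"
begin

definition rpow :: "real \<Rightarrow> real \<Rightarrow> real" where
  "rpow t a = (if t = 0 then (if a = 0 then 1 else 0) else t powr a)"

definition harm_alpha_m_convex_on :: "real set \<Rightarrow> real \<Rightarrow> real \<Rightarrow> (real \<Rightarrow> real) \<Rightarrow> bool" where
  "harm_alpha_m_convex_on J \<alpha> m h \<longleftrightarrow>
     (\<forall>x\<in>J. \<forall>y\<in>J. \<forall>t\<in>{0..1}.
        m * x * y / (m * t * y + (1 - t) * x) \<in> J \<longrightarrow>
        h (m * x * y / (m * t * y + (1 - t) * x))
          \<le> rpow t \<alpha> * h x + m * (1 - rpow t \<alpha>) * h y)"

definition RL_left :: "real \<Rightarrow> real \<Rightarrow> (real \<Rightarrow> real) \<Rightarrow> real \<Rightarrow> real" where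
  "RL_left \<theta> c \<phi> x = integral {c..x} (\<lambda>t. (x - t) powr (\<theta> - 1) * \<phi> t) / Gamma \<theta>"

definition RL_right :: "real \<Rightarrow> real \<Rightarrow> (real \<Rightarrow> real) \<Rightarrow> real \<Rightarrow> real" where
  "RL_right \<theta> d \<phi> x = integral {x..d} (\<lambda>t. (t - x) powr (\<theta> - 1) * \<phi> t) / Gamma \<theta>"

text \<open>Beta function and Gauss hypergeometric function (Euler integral representation).\<close>
definition beta_fn :: "real \<Rightarrow> real \<Rightarrow> real" where
  "beta_fn x y = integral {0..1} (\<lambda>t. t powr (x - 1) * (1 - t) powr (y - 1))"

definition hyp2F1 :: "real \<Rightarrow> real \<Rightarrow> real \<Rightarrow> real \<Rightarrow> real" where
  "hyp2F1 a b c z = integral {0..1} (\<lambda>t. t powr (b - 1) * (1 - t) powr (c - b - 1) * (1 - z * t) powr (- a))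
                     / beta_fn b (c - b)"

definition I_f :: "(real \<Rightarrow> real) \<Rightarrow> real \<Rightarrow> real \<Rightarrow> real \<Rightarrow> real" where
  "I_f f \<theta> a b = (f a + f b) / 2
     - Gamma (\<theta> + 1) / 2 * (a * b / (b - a)) powr \<theta>
       * (RL_right \<theta> (1/a) (\<lambda>x. f (1/x)) (1/b) + RL_left \<theta> (1/b) (\<lambda>x. f (1/x)) (1/a))"

definition C1 :: "real \<Rightarrow> real \<Rightarrow> real \<Rightarrow> real" where
  "C1 \<theta> a b = b powr (-2) / (\<theta> + 1) *
     (hyp2F1 2 (\<theta> + 1) (\<theta> + 2) (1 - a/b) + hyp2F1 2 1 (\<theta> + 2) (1 - a/b))"

definition C2 :: "real \<Rightarrow> real \<Rightarrow> real \<Rightarrow> real \<Rightarrow> real" where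
  "C2 \<theta> \<alpha> a b = beta_fn (\<theta> + 1) (\<alpha> + 1) / b^2 * hyp2F1 2 (\<theta> + 1) (\<theta> + \<alpha> + 2) (1 - a/b)
     + b powr (-2) / (\<theta> + \<alpha> + 1) * hyp2F1 2 1 (\<theta> + \<alpha> + 2) (1 - a/b)"

definition C3 :: "real \<Rightarrow> real \<Rightarrow> real \<Rightarrow> real \<Rightarrow> real" where
  "C3 \<theta> \<alpha> a b = C1 \<theta> a b - C2 \<theta> \<alpha> a b"

end

theory Submission
  imports Defs
begin

text \<open>
  The substitution x(s) = ab / (b - (b - a) s), which is affine in 1/x, maps [0, 1] onto [a, b]
  and turns the two Riemann--Liouville integrals in I_f into integrals of s^(\<theta>-1) f(x(s)) and
  (1 - s)^(\<theta>-1) f(x(s)) over [0, 1]. Integrating by parts gives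
  I_f = ab(b - a)/2 \<cdot> \<integral> (s^\<theta> - (1 - s)^\<theta>) f'(x(s)) / (b - (b - a) s)^2 ds over [0, 1].
  Bounding |s^\<theta> - (1 - s)^\<theta>| by s^\<theta> + (1 - s)^\<theta> leaves an integral against the weight
  w(s) = (s^\<theta> + (1 - s)^\<theta>) / (b - (b - a) s)^2, to which the power mean inequality
  \<integral> w |h| \<le> (\<integral> w)^(1-1/q) (\<integral> w |h|^q)^(1/q) applies; harmonic (\<alpha>,m)-convexity bounds
  |f'(x(s))|^q by (1 - s)^\<alpha> |f'(a)|^q + m (1 - (1 - s)^\<alpha>) |f'(b/m)|^q. By Euler's integral
  representation of the hypergeometric function, \<integral> w = C1 and \<integral> w (1 - s)^\<alpha> = C2.
  The power mean inequality itself follows from the tangent form of Young's inequality,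
  y \<le> (1 - 1/q) c + c^(1-q) y^q / q, optimised over c > 0.
\<close>

lemma Youngs_inequality_tangent:
  fixes y c q :: real
  assumes "0 \<le> y" "0 < c" "1 \<le> q"
  shows "y \<le> (1 - 1/q) * c + 1/q * c powr (1 - q) * y powr q"
proof (cases "y = 0")
  case True
  then show ?thesis using assms by simp
next
  case False
  define X where "X = c powr (1 - q) * y powr q"
  have "X powr (1/q) * c powr (1 - 1/q) = c powr ((1 - q)/q + (1 - 1/q)) * y"
    using assms False by (simp add: X_def powr_mult powr_powr powr_add)
  also have "(1 - q)/q + (1 - 1/q) = 0"
    using assms by (simp add: field_simps)
  finally have "X powr (1/q) * c powr (1 - 1/q) = y"
    using assms by simp
  moreover have "X powr (1/q) * c powr (1 - 1/q) \<le> 1/q * X + (1 - 1/q) * c"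
    using assms False by (intro Youngs_inequality_0) (auto simp: X_def)
  ultimately show ?thesis by (simp add: X_def algebra_simps)
qed

text \<open>The hypothesis 0 < W cannot be dropped: for q = 1 the bound contains 0 powr 0, which is 0.\<close>

lemma le_powr_mean_if_Young_bounds:
  fixes Y W M q :: real
  assumes "1 \<le> q" "0 < W" "0 \<le> M"
    and Young: "\<And>c. 0 < c \<Longrightarrow> Y \<le> (1 - 1/q) * c * W + 1/q * c powr (1 - q) * M"
  shows "Y \<le> W powr (1 - 1/q) * M powr (1/q)"
proof (cases "M = 0")
  case True
  have "Y \<le> 0"
  proof (rule ccontr)
    assume "\<not> Y \<le> 0"
    then have "Y \<le> (1 - 1/q) * (Y / (2 * W)) * W"
      using Young[of "Y / (2 * W)"] True assms by simp
    also have "\<dots> \<le> Y / 2"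
      using \<open>\<not> Y \<le> 0\<close> assms by (simp add: field_simps)
    finally show False using \<open>\<not> Y \<le> 0\<close> by simp
  qed
  then show ?thesis using True by simp
next
  case False
  then have "0 < M" using assms by simp
  \<comment> \<open>the minimising choice of the Young parameter\<close>
  define c where "c = (M / W) powr (1/q)"
  have "c * W = W powr (1 - 1/q) * M powr (1/q)"
    using \<open>0 < M\<close> assms by (simp add: c_def powr_divide powr_diff)
  moreover have "c powr (1 - q) * M = W powr (1 - 1/q) * M powr (1/q)"
  proof -
    have "1/q * (1 - q) = -(1 - 1/q)"
      using assms by (simp add: field_simps)
    then have "c powr (1 - q) = (M / W) powr (-(1 - 1/q))"
      unfolding c_def powr_powr by simp
    also have "\<dots> = W powr (1 - 1/q) / M powr (1 - 1/q)"
      unfolding powr_minus powr_divide by simp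
    finally show ?thesis
      using \<open>0 < M\<close> assms by (simp add: powr_diff)
  qed
  moreover have "0 < c" using \<open>0 < M\<close> assms by (simp add: c_def)
  ultimately show ?thesis
    using Young[of c] by (simp add: algebra_simps)
qed

lemma integral_weighted_le_powr_mean:
  fixes w h P :: "real \<Rightarrow> real" and S :: "real set"
  assumes "1 \<le> q" "0 < W"
    and w: "(w has_integral W) S" and wP: "((\<lambda>s. w s * P s) has_integral M) S"
    and wh: "(\<lambda>s. w s * \<bar>h s\<bar>) integrable_on S"
    and w_nonneg: "\<And>s. s \<in> S \<Longrightarrow> 0 \<le> w s"
    and P: "\<And>s. s \<in> S \<Longrightarrow> \<bar>h s\<bar> powr q \<le> P s"
  shows "integral S (\<lambda>s. w s * \<bar>h s\<bar>) \<le> W powr (1 - 1/q) * M powr (1/q)"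
proof (rule le_powr_mean_if_Young_bounds)
  show "0 \<le> M"
    by (rule has_integral_nonneg[OF wP])
       (use w_nonneg P in \<open>meson mult_nonneg_nonneg order_trans powr_ge_zero\<close>)
  fix c :: real
  assume "0 < c"
  have "((\<lambda>s. (1 - 1/q) * c * w s + 1/q * c powr (1 - q) * (w s * P s)) has_integral
          (1 - 1/q) * c * W + 1/q * c powr (1 - q) * M) S"
    by (intro has_integral_add has_integral_mult_right w wP)
  then show "integral S (\<lambda>s. w s * \<bar>h s\<bar>) \<le> (1 - 1/q) * c * W + 1/q * c powr (1 - q) * M"
  proof (rule has_integral_le[OF integrable_integral[OF wh]])
    fix s assume "s \<in> S"
    have "\<bar>h s\<bar> \<le> (1 - 1/q) * c + 1/q * c powr (1 - q) * \<bar>h s\<bar> powr q"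
      using Youngs_inequality_tangent \<open>0 < c\<close> assms(1) by simp
    also have "\<dots> \<le> (1 - 1/q) * c + 1/q * c powr (1 - q) * P s"
      using P[OF \<open>s \<in> S\<close>] assms(1) by (intro add_left_mono mult_left_mono) auto
    finally show "w s * \<bar>h s\<bar> \<le> (1 - 1/q) * c * w s + 1/q * c powr (1 - q) * (w s * P s)"
      using mult_left_mono[OF _ w_nonneg[OF \<open>s \<in> S\<close>]] by (fastforce simp: algebra_simps)
  qed
qed (use assms in auto)

lemma rpow_eq_powr: "p \<noteq> 0 \<Longrightarrow> rpow t p = t powr p"
  by (simp add: rpow_def)

lemma rpow_zero_right [simp]: "rpow t 0 = 1"
  by (simp add: rpow_def)

lemma rpow_add_left: "0 < p \<Longrightarrow> 0 \<le> r \<Longrightarrow> rpow t (p + r) = t powr p * rpow t r"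
  by (auto simp: rpow_def powr_add)

lemma continuous_on_rpow:
  assumes "0 \<le> p" "continuous_on S g" "\<And>x. x \<in> S \<Longrightarrow> 0 \<le> g x"
  shows "continuous_on S (\<lambda>x. rpow (g x) p)"
proof (cases "p = 0")
  case False
  then have "continuous_on S (\<lambda>x. g x powr p)"
    using assms by (intro continuous_on_powr') auto
  then show ?thesis
    using False by (simp add: rpow_eq_powr)
next
  case True
  then show ?thesis by simp
qed

lemma beta_fn_eq_Beta: "0 < x \<Longrightarrow> 0 < y \<Longrightarrow> beta_fn x y = Beta x y"
  unfolding beta_fn_def by (rule integral_unique, rule has_integral_Beta_real) auto

lemma Beta_real_pos: "0 < x \<Longrightarrow> 0 < y \<Longrightarrow> 0 < Beta x (y::real)"
  by (simp add: Beta_def)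

lemma Beta_one_left:
  assumes "0 < y"
  shows "Beta 1 y = 1 / (y::real)"
proof -
  have "Gamma (1 + y) = y * Gamma y"
    using Gamma_plus1[of y] assms by (simp add: add.commute nonpos_Ints_def)
  moreover have "0 < Gamma y"
    using assms by (rule Gamma_real_pos)
  ultimately show ?thesis by (simp add: Beta_def)
qed

text \<open>1 / harm_path a b s = (1 - s) / a + s / b: the path runs from a to b linearly in 1/x.\<close>

definition harm_path :: "real \<Rightarrow> real \<Rightarrow> real \<Rightarrow> real" where
  "harm_path a b s = a * b / (b - (b - a) * s)"

definition harm_path_deriv :: "real \<Rightarrow> real \<Rightarrow> real \<Rightarrow> real" where
  "harm_path_deriv a b s = a * b * (b - a) / (b - (b - a) * s)^2"

lemma harm_path_denom_ge:
  fixes a b s :: real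
  assumes "a \<le> b" "s \<le> 1"
  shows "a \<le> b - (b - a) * s"
  using mult_left_mono[OF assms(2), of "b - a"] assms by simp

lemma harm_path_0 [simp]: "b \<noteq> 0 \<Longrightarrow> harm_path a b 0 = a"
  and harm_path_1 [simp]: "a \<noteq> 0 \<Longrightarrow> harm_path a b 1 = b"
  by (simp_all add: harm_path_def)

lemma harm_path_has_real_derivative:
  assumes "0 < a" "a \<le> b" "s \<le> 1"
  shows "(harm_path a b has_real_derivative harm_path_deriv a b s) (at s)"
proof -
  have "b - (b - a) * s \<noteq> 0"
    using harm_path_denom_ge[OF assms(2,3)] assms(1) by linarith
  then show ?thesis
    unfolding harm_path_def harm_path_deriv_def
    by (auto intro!: derivative_eq_intros simp: power2_eq_square field_simps)
qed

lemma harm_path_deriv_nonneg: "0 \<le> a \<Longrightarrow> a \<le> b \<Longrightarrow> 0 \<le> harm_path_deriv a b s"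
  by (simp add: harm_path_deriv_def)

lemma harm_path_image:
  assumes "0 < a" "a < b"
  shows "harm_path a b ` {0..1} = {a..b}"
proof
  show "harm_path a b ` {0..1} \<subseteq> {a..b}"
  proof
    fix y assume "y \<in> harm_path a b ` {0..1}"
    then obtain s where s: "s \<in> {0..1}" "y = harm_path a b s" by blast
    define d where "d = b - (b - a) * s"
    have "a \<le> d" "d \<le> b"
      using harm_path_denom_ge[of a b s] s assms by (auto simp: d_def)
    then have "a * d \<le> a * b" "a * b \<le> b * d"
      using assms by (auto intro: mult_left_mono)
    then show "y \<in> {a..b}"
      using s \<open>a \<le> d\<close> assms by (simp add: harm_path_def d_def[symmetric] le_divide_eq divide_le_eq)
  qed
  show "{a..b} \<subseteq> harm_path a b ` {0..1}"
  proof
    fix y assume y: "y \<in> {a..b}"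
    then have "0 < y" using assms by simp
    define s where "s = (b - a * b / y) / (b - a)"
    have "s \<in> {0..1}"
      using y \<open>0 < y\<close> assms by (auto simp: s_def field_simps)
    moreover have "harm_path a b s = y"
      using \<open>0 < y\<close> assms by (simp add: harm_path_def s_def)
    ultimately show "y \<in> harm_path a b ` {0..1}" by force
  qed
qed

lemma inj_on_harm_path:
  assumes "0 < a" "a < b"
  shows "inj_on (harm_path a b) {0..1}"
proof
  fix s t :: real
  assume "harm_path a b s = harm_path a b t"
  then have "b - (b - a) * s = b - (b - a) * t"
    using assms unfolding harm_path_def divide_cancel_left by simp
  then show "s = t"
    using assms by auto
qed

lemma absolutely_integrable_harm_path_subst:
  fixes g :: "real \<Rightarrow> real"
  assumes "0 < a" "a < b" "g absolutely_integrable_on {a..b}"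
  shows "(\<lambda>s. harm_path_deriv a b s * g (harm_path a b s)) absolutely_integrable_on {0..1}"
proof -
  have "\<And>s. s \<in> {0..1} \<Longrightarrow>
          (harm_path a b has_field_derivative harm_path_deriv a b s) (at s within {0..1})"
    using assms by (auto intro!: has_field_derivative_at_within[OF harm_path_has_real_derivative])
  note change_of_variables =
    has_absolute_integral_change_of_variables_1'[OF _ this inj_on_harm_path[OF assms(1,2)]]
  have "g absolutely_integrable_on harm_path a b ` {0..1}"
    using assms(3) unfolding harm_path_image[OF assms(1,2)] .
  then have "(\<lambda>s. \<bar>harm_path_deriv a b s\<bar> * g (harm_path a b s)) absolutely_integrable_on {0..1}"
    using iffD2[OF change_of_variables[of g "integral (harm_path a b ` {0..1}) g"]] by simp
  then show ?thesis
    using assms by (simp add: harm_path_deriv_nonneg)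
qed

lemma has_integral_reciprocal_harm_path:
  fixes k \<phi> :: "real \<Rightarrow> real"
  assumes "0 < a" "a < b"
    and J: "((\<lambda>s. k ((b - a) / (a * b) * s) * \<phi> (harm_path a b s)) has_integral J) {0..1}"
  shows "((\<lambda>t. k (1/a - t) * \<phi> (1/t)) has_integral (b - a) / (a * b) * J) {1/b..1/a}"
proof -
  define c where "c = (b - a) / (a * b)"
  have "0 < c" "1/a - c = 1/b"
    using assms by (simp_all add: c_def field_simps)
  have "((\<lambda>t. k (c * ((-1/c) * t + 1/(a*c))) * \<phi> (harm_path a b ((-1/c) * t + 1/(a*c))))
          has_integral (1 / \<bar>-1/c\<bar>) * J) ((\<lambda>t. (-c) * t + 1/a) ` cbox 0 1)"
    using has_integral_affinity[OF J[unfolded c_def[symmetric], folded cbox_interval], of "-1/c" "1/(a*c)"]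
      \<open>0 < c\<close> by (simp add: field_simps)
  moreover have "(\<lambda>t. (-c) * t + 1/a) ` cbox 0 1 = {1/b..1/a}"
    using image_affinity_cbox[where m = "-c" and a = 0 and b = 1 and c = "1/a"] \<open>0 < c\<close> \<open>1/a - c = 1/b\<close> by simp
  moreover have "c * ((-1/c) * t + 1/(a*c)) = 1/a - t" for t
    using \<open>0 < c\<close> assms by (simp add: field_simps)
  moreover have reciprocal: "harm_path a b ((-1/c) * t + 1/(a*c)) = 1/t" if "t \<in> {1/b..1/a}" for t
  proof -
    have "0 < t" using that assms by (auto intro: less_le_trans[of 0 "1/b"])
    have ba: "b - a = c * (a * b)"
      using assms(1,2) by (simp add: c_def)
    have "b - (b - a) * ((-1/c) * t + 1/(a*c)) = a * b * t"
      unfolding ba using \<open>0 < c\<close> assms(1) by (simp add: field_simps)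
    then show ?thesis
      using \<open>0 < t\<close> assms(1,2) by (simp add: harm_path_def)
  qed
  ultimately have "((\<lambda>t. k (1/a - t) * \<phi> (harm_path a b ((-1/c) * t + 1/(a*c))))
                     has_integral c * J) {1/b..1/a}"
    using \<open>0 < c\<close> by simp
  then show ?thesis
    unfolding c_def[symmetric] by (rule has_integral_eq[rotated]) (use reciprocal in auto)
qed

lemma has_integral_hyp2F1_kernel:
  fixes a b P Q :: real
  assumes "0 < a" "a < b" "0 \<le> P" "0 \<le> Q"
  shows "((\<lambda>t. rpow t P * rpow (1 - t) Q / (b - (b - a) * t)^2) has_integral
          Beta (P + 1) (Q + 1) / b^2 * hyp2F1 2 (P + 1) (P + Q + 2) (1 - a/b)) {0..1}"
proof -
  let ?k = "\<lambda>t. rpow t P * rpow (1 - t) Q / (b - (b - a) * t)^2"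
  have denom: "0 < b - (b - a) * t" if "t \<le> 1" for t
    using harm_path_denom_ge[of a b t] that assms by linarith
  have "continuous_on {0..1} ?k"
    using denom assms by (intro continuous_intros continuous_on_rpow) force+
  then have k: "(?k has_integral integral {0..1} ?k) {0..1}"
    by (intro integrable_integral integrable_continuous_interval)
  have "((\<lambda>t. t powr P * (1 - t) powr Q * (1 - (1 - a/b) * t) powr (-2))
          has_integral b^2 * integral {0..1} ?k) {0..1}"
  proof (rule has_integral_spike_finite[where S = "{0, 1}", OF _ _ has_integral_mult_right[OF k]])
    fix t :: real assume "t \<in> {0..1} - {0, 1}"
    moreover have "1 - (1 - a/b) * t = (b - (b - a) * t) / b"
      using assms by (simp add: field_simps)
    moreover have "0 < b - (b - a) * t"
      using denom calculation(1) by simp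
    ultimately show "t powr P * (1 - t) powr Q * (1 - (1 - a/b) * t) powr (-2) = b^2 * ?k t"
      using assms by (simp add: rpow_def powr_minus powr_divide field_simps)
  qed simp
  then have "hyp2F1 2 (P + 1) (P + Q + 2) (1 - a/b) = b^2 * integral {0..1} ?k / Beta (P + 1) (Q + 1)"
    using assms by (simp add: hyp2F1_def beta_fn_eq_Beta integral_unique add_ac)
  then show ?thesis
    using k Beta_real_pos[of "P + 1" "Q + 1"] assms by simp
qed

definition weight :: "real \<Rightarrow> real \<Rightarrow> real \<Rightarrow> real \<Rightarrow> real" where
  "weight \<theta> a b s = (s powr \<theta> + (1 - s) powr \<theta>) / (b - (b - a) * s)^2"

lemma weight_nonneg: "0 \<le> weight \<theta> a b s"
  by (simp add: weight_def)

lemma has_integral_weight: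
  fixes a b \<theta> :: real
  assumes "0 < a" "a < b" "0 < \<theta>"
  shows "(weight \<theta> a b has_integral C1 \<theta> a b) {0..1}"
proof -
  have "Beta (\<theta> + 1) 1 = 1 / (\<theta> + 1)" "Beta 1 (\<theta> + 1) = 1 / (\<theta> + 1)"
    using Beta_one_left[of "\<theta> + 1"] Beta_commute[of "\<theta> + 1" 1] assms by simp_all
  then have "((\<lambda>t. rpow t \<theta> * rpow (1 - t) 0 / (b - (b - a) * t)^2
                 + rpow t 0 * rpow (1 - t) \<theta> / (b - (b - a) * t)^2) has_integral C1 \<theta> a b) {0..1}"
    using has_integral_add[OF has_integral_hyp2F1_kernel[of a b \<theta> 0] has_integral_hyp2F1_kernel[of a b 0 \<theta>]]
      assms by (simp add: C1_def powr_minus divide_inverse algebra_simps)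
  moreover have "rpow t \<theta> * rpow (1 - t) 0 / (b - (b - a) * t)^2
                 + rpow t 0 * rpow (1 - t) \<theta> / (b - (b - a) * t)^2 = weight \<theta> a b t" for t
    using assms by (simp add: weight_def rpow_eq_powr add_divide_distrib)
  ultimately show ?thesis by simp
qed

lemma has_integral_weight_rpow:
  fixes a b \<theta> \<alpha> :: real
  assumes "0 < a" "a < b" "0 < \<theta>" "0 \<le> \<alpha>"
  shows "((\<lambda>s. weight \<theta> a b s * rpow (1 - s) \<alpha>) has_integral C2 \<theta> \<alpha> a b) {0..1}"
proof -
  have "Beta 1 (\<theta> + \<alpha> + 1) = 1 / (\<theta> + \<alpha> + 1)"
    using Beta_one_left[of "\<theta> + \<alpha> + 1"] assms by simp
  then have "((\<lambda>t. rpow t \<theta> * rpow (1 - t) \<alpha> / (b - (b - a) * t)^2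
                 + rpow t 0 * rpow (1 - t) (\<theta> + \<alpha>) / (b - (b - a) * t)^2) has_integral C2 \<theta> \<alpha> a b) {0..1}"
    using has_integral_add[OF has_integral_hyp2F1_kernel[of a b \<theta> \<alpha>]
        has_integral_hyp2F1_kernel[of a b 0 "\<theta> + \<alpha>"]] assms
    by (simp add: C2_def beta_fn_eq_Beta powr_minus divide_inverse algebra_simps)
  moreover have "rpow t \<theta> * rpow (1 - t) \<alpha> / (b - (b - a) * t)^2
                 + rpow t 0 * rpow (1 - t) (\<theta> + \<alpha>) / (b - (b - a) * t)^2
                 = weight \<theta> a b t * rpow (1 - t) \<alpha>" for t
    using assms rpow_add_left[of \<theta> \<alpha> "1 - t"] rpow_eq_powr[of \<theta> t]
    by (simp add: weight_def add_divide_distrib algebra_simps)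
  ultimately show ?thesis by simp
qed

lemma has_integral_weight_convex_combination:
  fixes a b \<theta> \<alpha> m A B :: real
  assumes "0 < a" "a < b" "0 < \<theta>" "0 \<le> \<alpha>"
  shows "((\<lambda>s. weight \<theta> a b s * (rpow (1 - s) \<alpha> * A + m * (1 - rpow (1 - s) \<alpha>) * B))
           has_integral C2 \<theta> \<alpha> a b * A + m * C3 \<theta> \<alpha> a b * B) {0..1}"
proof -
  have "((\<lambda>s. A * (weight \<theta> a b s * rpow (1 - s) \<alpha>)
              + m * B * (weight \<theta> a b s - weight \<theta> a b s * rpow (1 - s) \<alpha>))
         has_integral A * C2 \<theta> \<alpha> a b + m * B * (C1 \<theta> a b - C2 \<theta> \<alpha> a b)) {0..1}"
    using assms by (intro has_integral_add has_integral_mult_right has_integral_diff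
        has_integral_weight has_integral_weight_rpow)
  then show ?thesis
    by (simp add: C3_def algebra_simps)
qed

lemma C1_pos:
  fixes a b \<theta> :: real
  assumes "0 < a" "a < b" "0 < \<theta>"
  shows "0 < C1 \<theta> a b"
proof -
  have lower: "(1/2) powr \<theta> / b^2 \<le> weight \<theta> a b s" if "s \<in> {0..1}" for s
  proof -
    have "(1/2) powr \<theta> \<le> max s (1 - s) powr \<theta>"
      using assms by (intro powr_mono2) (auto simp: max_def)
    also have "\<dots> \<le> s powr \<theta> + (1 - s) powr \<theta>"
      by (simp add: max_def)
    finally have "(1/2) powr \<theta> / b^2 \<le> (s powr \<theta> + (1 - s) powr \<theta>) / b^2"
      by (simp add: divide_right_mono)
    also have "\<dots> \<le> weight \<theta> a b s"
      unfolding weight_def using harm_path_denom_ge[of a b s] that assms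
      by (intro divide_left_mono power_mono mult_pos_pos) auto
    finally show ?thesis .
  qed
  have "((\<lambda>s. (1/2) powr \<theta> / b^2) has_integral (1/2) powr \<theta> / b^2) {0..1::real}"
    using has_integral_const_real[of "(1/2) powr \<theta> / b^2" 0 1] by simp
  then have "(1/2) powr \<theta> / b^2 \<le> C1 \<theta> a b"
    by (rule has_integral_le[OF _ has_integral_weight[OF assms]]) (rule lower)
  moreover have "0 < (1/2) powr \<theta> / b^2"
    using assms by simp
  ultimately show ?thesis by linarith
qed

lemma has_integral_by_parts_powr:
  fixes F F' :: "real \<Rightarrow> real"
  assumes "0 < \<theta>"
    and F: "\<And>s. s \<in> {0..1} \<Longrightarrow> (F has_real_derivative F' s) (at s)"
    and int: "(\<lambda>s. s powr \<theta> * F' s) integrable_on {0..1}"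
  shows "((\<lambda>s. \<theta> * s powr (\<theta> - 1) * F s) has_integral
           F 1 - integral {0..1} (\<lambda>s. s powr \<theta> * F' s)) {0..1}"
proof (rule integration_by_parts_interior[OF bounded_bilinear_mult, where f = "\<lambda>s. s powr \<theta>"])
  show "continuous_on {0..1} (\<lambda>s. s powr \<theta>)"
    using assms by (intro continuous_on_powr') auto
  show "continuous_on {0..1} F"
    by (rule DERIV_continuous_on, rule has_field_derivative_at_within, erule F)
  fix s :: real assume "s \<in> {0<..<1}"
  then show "((\<lambda>s. s powr \<theta>) has_vector_derivative \<theta> * s powr (\<theta> - 1)) (at s)"
    by (simp add: has_real_derivative_powr flip: has_real_derivative_iff_has_vector_derivative)
  show "(F has_vector_derivative F' s) (at s)"
    using F \<open>s \<in> {0<..<1}\<close> by (simp add: has_real_derivative_iff_has_vector_derivative)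
next
  show "((\<lambda>s. s powr \<theta> * F' s) has_integral
          1 powr \<theta> * F 1 - 0 powr \<theta> * F 0 - (F 1 - integral {0..1} (\<lambda>s. s powr \<theta> * F' s))) {0..1}"
    using int by (simp add: integrable_integral)
qed simp

lemma has_integral_by_parts_one_minus_powr:
  fixes F F' :: "real \<Rightarrow> real"
  assumes "0 < \<theta>"
    and F: "\<And>s. s \<in> {0..1} \<Longrightarrow> (F has_real_derivative F' s) (at s)"
    and int: "(\<lambda>s. (1 - s) powr \<theta> * F' s) integrable_on {0..1}"
  shows "((\<lambda>s. \<theta> * (1 - s) powr (\<theta> - 1) * F s) has_integral
           F 0 + integral {0..1} (\<lambda>s. (1 - s) powr \<theta> * F' s)) {0..1}"
proof (rule integration_by_parts_interior[OF bounded_bilinear_mult, where f = "\<lambda>s. -((1 - s) powr \<theta>)"])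
  show "continuous_on {0..1} (\<lambda>s. -((1 - s) powr \<theta>))"
    using assms by (intro continuous_intros continuous_on_powr') auto
  show "continuous_on {0..1} F"
    by (rule DERIV_continuous_on, rule has_field_derivative_at_within, erule F)
  fix s :: real assume "s \<in> {0<..<1}"
  then have "((\<lambda>s. -((1 - s) powr \<theta>)) has_real_derivative - (\<theta> * (1 - s) powr (\<theta> - 1) * -1)) (at s)"
    by (intro derivative_intros DERIV_chain2[OF has_real_derivative_powr])
       (auto intro!: derivative_eq_intros)
  then show "((\<lambda>s. -((1 - s) powr \<theta>)) has_vector_derivative \<theta> * (1 - s) powr (\<theta> - 1)) (at s)"
    by (simp add: has_real_derivative_iff_has_vector_derivative)
  show "(F has_vector_derivative F' s) (at s)"
    using F \<open>s \<in> {0<..<1}\<close> by (simp add: has_real_derivative_iff_has_vector_derivative)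
next
  show "((\<lambda>s. -((1 - s) powr \<theta>) * F' s) has_integral
          -((1 - 1) powr \<theta>) * F 1 - -((1 - 0) powr \<theta>) * F 0
          - (F 0 + integral {0..1} (\<lambda>s. (1 - s) powr \<theta> * F' s))) {0..1}"
    using has_integral_neg[OF integrable_integral[OF int]] by simp
qed simp

lemma RL_left_harm_path:
  fixes \<phi> :: "real \<Rightarrow> real"
  assumes "0 < a" "a < b"
    and J: "((\<lambda>s. s powr (\<theta> - 1) * \<phi> (harm_path a b s)) has_integral J) {0..1}"
  shows "RL_left \<theta> (1/b) (\<lambda>x. \<phi> (1/x)) (1/a) = ((b - a) / (a * b)) powr \<theta> * J / Gamma \<theta>"
proof -
  define c where "c = (b - a) / (a * b)"
  have "0 < c" using assms by (simp add: c_def)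
  have "((\<lambda>s. (c * s) powr (\<theta> - 1) * \<phi> (harm_path a b s)) has_integral c powr (\<theta> - 1) * J) {0..1}"
    by (rule has_integral_eq[OF _ has_integral_mult_right[OF J]])
       (use \<open>0 < c\<close> in \<open>auto simp: powr_mult\<close>)
  from has_integral_reciprocal_harm_path[OF assms(1,2), of "\<lambda>x. x powr (\<theta> - 1)", folded c_def, OF this]
  have "((\<lambda>t. (1/a - t) powr (\<theta> - 1) * \<phi> (1/t)) has_integral c powr \<theta> * J) {1/b..1/a}"
    using \<open>0 < c\<close> by (simp add: powr_diff)
  then show ?thesis
    unfolding RL_left_def c_def by (simp add: integral_unique)
qed

lemma RL_right_harm_path:
  fixes \<phi> :: "real \<Rightarrow> real"
  assumes "0 < a" "a < b"
    and J: "((\<lambda>s. (1 - s) powr (\<theta> - 1) * \<phi> (harm_path a b s)) has_integral J) {0..1}"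
  shows "RL_right \<theta> (1/a) (\<lambda>x. \<phi> (1/x)) (1/b) = ((b - a) / (a * b)) powr \<theta> * J / Gamma \<theta>"
proof -
  define c where "c = (b - a) / (a * b)"
  have "0 < c" "1/a - c = 1/b"
    using assms by (simp_all add: c_def field_simps)
  have "((\<lambda>s. (c - c * s) powr (\<theta> - 1) * \<phi> (harm_path a b s)) has_integral c powr (\<theta> - 1) * J) {0..1}"
    by (rule has_integral_eq[OF _ has_integral_mult_right[OF J]])
       (use \<open>0 < c\<close> in \<open>auto simp: powr_mult[symmetric] right_diff_distrib\<close>)
  from has_integral_reciprocal_harm_path[OF assms(1,2), of "\<lambda>x. (c - x) powr (\<theta> - 1)", folded c_def, OF this]
  have "((\<lambda>t. (t - 1/b) powr (\<theta> - 1) * \<phi> (1/t)) has_integral c powr \<theta> * J) {1/b..1/a}"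
    using \<open>0 < c\<close> \<open>1/a - c = 1/b\<close> by (simp add: powr_diff algebra_simps)
  then show ?thesis
    unfolding RL_right_def c_def by (simp add: integral_unique)
qed

lemma absolutely_integrable_continuous_mult:
  fixes h F :: "real \<Rightarrow> real"
  assumes "continuous_on {a..b} h" "F absolutely_integrable_on {a..b}"
  shows "(\<lambda>s. h s * F s) absolutely_integrable_on {a..b}"
  by (intro absolutely_integrable_bounded_measurable_product_real assms
      continuous_imp_measurable_on_sets_lebesgue compact_imp_bounded compact_continuous_image) auto

lemma I_f_eq_of_RL_integrals:
  fixes f :: "real \<Rightarrow> real"
  assumes "0 < a" "a < b" "0 < \<theta>"
    and L: "((\<lambda>s. s powr (\<theta> - 1) * f (harm_path a b s)) has_integral (f b - X1) / \<theta>) {0..1}"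
    and R: "((\<lambda>s. (1 - s) powr (\<theta> - 1) * f (harm_path a b s)) has_integral (f a + X2) / \<theta>) {0..1}"
  shows "I_f f \<theta> a b = (X1 - X2) / 2"
proof -
  have "Gamma (\<theta> + 1) = \<theta> * Gamma \<theta>"
    using assms by (intro Gamma_plus1) (auto simp: nonpos_Ints_def)
  moreover have "Gamma \<theta> \<noteq> 0"
    using Gamma_real_pos[OF assms(3)] by linarith
  moreover have "(a * b / (b - a)) powr \<theta> = 1 / ((b - a) / (a * b)) powr \<theta>"
    using assms by (simp add: powr_divide)
  moreover have "0 < ((b - a) / (a * b)) powr \<theta>"
    using assms by simp
  ultimately show ?thesis
    unfolding I_f_def RL_left_harm_path[OF assms(1,2) L] RL_right_harm_path[OF assms(1,2) R]
    using assms by (simp add: field_simps)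
qed

lemma I_f_eq_integral_harm_path:
  fixes f g :: "real \<Rightarrow> real"
  assumes "0 < a" "a < b" "0 < \<theta>"
    and der: "\<And>x. x \<in> {a..b} \<Longrightarrow> (f has_real_derivative g x) (at x)"
    and "g absolutely_integrable_on {a..b}"
  shows "I_f f \<theta> a b = integral {0..1} (\<lambda>s. (s powr \<theta> - (1 - s) powr \<theta>)
                              * (harm_path_deriv a b s * g (harm_path a b s))) / 2"
proof -
  define D where "D s = harm_path_deriv a b s * g (harm_path a b s)" for s
  define X1 where "X1 = integral {0..1} (\<lambda>s. s powr \<theta> * D s)"
  define X2 where "X2 = integral {0..1} (\<lambda>s. (1 - s) powr \<theta> * D s)"
  have D: "D absolutely_integrable_on {0..1}"
    unfolding D_def using absolutely_integrable_harm_path_subst assms by blast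
  have int1: "(\<lambda>s. s powr \<theta> * D s) integrable_on {0..1}"
    using absolutely_integrable_continuous_mult[OF _ D] assms
    by (simp add: continuous_on_powr' continuous_intros set_lebesgue_integral_eq_integral)
  have int2: "(\<lambda>s. (1 - s) powr \<theta> * D s) integrable_on {0..1}"
    using absolutely_integrable_continuous_mult[OF _ D] assms
    by (simp add: continuous_on_powr' continuous_intros set_lebesgue_integral_eq_integral)
  have F: "((\<lambda>s. f (harm_path a b s)) has_real_derivative D s) (at s)" if "s \<in> {0..1}" for s
  proof -
    have "harm_path a b s \<in> {a..b}"
      using that harm_path_image[OF assms(1,2)] by blast
    from DERIV_chain2[OF der[OF this] harm_path_has_real_derivative]
    show ?thesis
      using that assms by (simp add: D_def mult.commute)
  qed
  have L: "((\<lambda>s. s powr (\<theta> - 1) * f (harm_path a b s)) has_integral (f b - X1) / \<theta>) {0..1}"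
    using has_integral_mult_right[OF has_integral_by_parts_powr[OF assms(3) F int1], of "1/\<theta>"] assms
    by (simp add: X1_def harm_path_1 field_simps)
  have R: "((\<lambda>s. (1 - s) powr (\<theta> - 1) * f (harm_path a b s)) has_integral (f a + X2) / \<theta>) {0..1}"
    using has_integral_mult_right[OF has_integral_by_parts_one_minus_powr[OF assms(3) F int2], of "1/\<theta>"] assms
    by (simp add: X2_def field_simps)
  have "I_f f \<theta> a b = (X1 - X2) / 2"
    by (rule I_f_eq_of_RL_integrals[OF assms(1-3) L R])
  also have "X1 - X2 = integral {0..1} (\<lambda>s. (s powr \<theta> - (1 - s) powr \<theta>) * D s)"
    unfolding X1_def X2_def integral_diff[OF int1 int2, symmetric] by (simp add: left_diff_distrib)
  finally show ?thesis
    by (simp add: D_def)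
qed

lemma weight_mult_harm_path_deriv:
  "(s powr \<theta> + (1 - s) powr \<theta>) * harm_path_deriv a b s = a * b * (b - a) * weight \<theta> a b s"
  by (simp add: weight_def harm_path_deriv_def)

lemma absolutely_integrable_weight_harm_path_subst:
  fixes g :: "real \<Rightarrow> real"
  assumes "0 < a" "a < b" "0 < \<theta>" "g absolutely_integrable_on {a..b}"
  shows "(\<lambda>s. weight \<theta> a b s * g (harm_path a b s)) absolutely_integrable_on {0..1}"
proof -
  define K where "K = a * b * (b - a)"
  have "0 < K" using assms by (simp add: K_def)
  have "(\<lambda>s. (s powr \<theta> + (1 - s) powr \<theta>) / K * (harm_path_deriv a b s * g (harm_path a b s)))
          absolutely_integrable_on {0..1}"
    using assms \<open>0 < K\<close>
    by (intro absolutely_integrable_continuous_mult absolutely_integrable_harm_path_subst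
        continuous_intros continuous_on_powr') auto
  moreover have "(s powr \<theta> + (1 - s) powr \<theta>) / K * (harm_path_deriv a b s * g (harm_path a b s))
                 = weight \<theta> a b s * g (harm_path a b s)" for s
    using weight_mult_harm_path_deriv[of s \<theta> a b] \<open>0 < K\<close> unfolding K_def[symmetric]
    by (metis (no_types, lifting) mult.assoc nonzero_mult_div_cancel_left times_divide_eq_left order_less_irrefl)
  ultimately show ?thesis by simp
qed

lemma abs_I_f_le_integral_weight:
  fixes f g :: "real \<Rightarrow> real"
  assumes "0 < a" "a < b" "0 < \<theta>"
    and der: "\<And>x. x \<in> {a..b} \<Longrightarrow> (f has_real_derivative g x) (at x)"
    and g: "g absolutely_integrable_on {a..b}"
  shows "(\<lambda>s. weight \<theta> a b s * \<bar>g (harm_path a b s)\<bar>) integrable_on {0..1}"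
    and "\<bar>I_f f \<theta> a b\<bar> \<le> a * b * (b - a) / 2 * integral {0..1} (\<lambda>s. weight \<theta> a b s * \<bar>g (harm_path a b s)\<bar>)"
proof -
  define D where "D s = harm_path_deriv a b s * g (harm_path a b s)" for s
  define K where "K = a * b * (b - a)"
  have "0 < K" using assms by (simp add: K_def)
  show wg: "(\<lambda>s. weight \<theta> a b s * \<bar>g (harm_path a b s)\<bar>) integrable_on {0..1}"
    using absolutely_integrable_weight_harm_path_subst[OF assms(1-3) g]
    by (simp add: absolutely_integrable_on_def abs_mult weight_nonneg)
  have "(\<lambda>s. (s powr \<theta> - (1 - s) powr \<theta>) * D s) integrable_on {0..1}"
    unfolding D_def using assms
    by (intro set_lebesgue_integral_eq_integral(1) absolutely_integrable_continuous_mult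
        absolutely_integrable_harm_path_subst continuous_intros continuous_on_powr') auto
  then have "norm (integral {0..1} (\<lambda>s. (s powr \<theta> - (1 - s) powr \<theta>) * D s))
               \<le> integral {0..1} (\<lambda>s. K * (weight \<theta> a b s * \<bar>g (harm_path a b s)\<bar>))"
  proof (rule integral_norm_bound_integral)
    show "(\<lambda>s. K * (weight \<theta> a b s * \<bar>g (harm_path a b s)\<bar>)) integrable_on {0..1}"
      using wg \<open>0 < K\<close> by simp
    fix s :: real
    have "\<bar>s powr \<theta> - (1 - s) powr \<theta>\<bar> \<le> s powr \<theta> + (1 - s) powr \<theta>"
      using powr_ge_zero[of s \<theta>] powr_ge_zero[of "1 - s" \<theta>] by linarith
    then have "\<bar>(s powr \<theta> - (1 - s) powr \<theta>) * D s\<bar> \<le> (s powr \<theta> + (1 - s) powr \<theta>) * \<bar>D s\<bar>"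
      by (simp add: abs_mult mult_right_mono)
    also have "\<dots> = K * (weight \<theta> a b s * \<bar>g (harm_path a b s)\<bar>)"
      using weight_mult_harm_path_deriv[of s \<theta> a b] assms
      by (simp add: D_def K_def abs_mult harm_path_deriv_nonneg mult.assoc[symmetric])
    finally show "norm ((s powr \<theta> - (1 - s) powr \<theta>) * D s) \<le> K * (weight \<theta> a b s * \<bar>g (harm_path a b s)\<bar>)"
      by simp
  qed
  moreover have "I_f f \<theta> a b = integral {0..1} (\<lambda>s. (s powr \<theta> - (1 - s) powr \<theta>) * D s) / 2"
    using I_f_eq_integral_harm_path[OF assms] by (simp add: D_def)
  ultimately show "\<bar>I_f f \<theta> a b\<bar> \<le> a * b * (b - a) / 2 * integral {0..1} (\<lambda>s. weight \<theta> a b s * \<bar>g (harm_path a b s)\<bar>)"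
    by (simp add: K_def)
qed

lemma is_interval_interior_contains:
  fixes I :: "real set"
  assumes "is_interval I" "x \<in> interior I" "y \<in> interior I"
  shows "{x..y} \<subseteq> interior I"
proof -
  have "is_interval (interior I)"
    using assms(1) by (simp add: is_interval_convex_1 convex_interior)
  then show ?thesis
    using assms(2,3) unfolding is_interval_1 by (meson atLeastAtMost_iff subsetI)
qed

lemma harm_alpha_m_convex_on_harm_path:
  assumes h: "harm_alpha_m_convex_on {a..b/m} \<alpha> m h"
    and "0 < a" "a < b" "0 < m" "m \<le> 1" "s \<in> {0..1}"
  shows "h (harm_path a b s) \<le> rpow (1 - s) \<alpha> * h a + m * (1 - rpow (1 - s) \<alpha>) * h (b/m)"
proof -
  have "b \<le> b/m"
    using assms by (simp add: field_simps)
  have "m * a * (b/m) / (m * (1 - s) * (b/m) + (1 - (1 - s)) * a) = harm_path a b s"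
    using assms by (simp add: harm_path_def algebra_simps)
  moreover have "harm_path a b s \<in> {a..b/m}"
    using harm_path_image[OF assms(2,3)] assms(6) \<open>b \<le> b/m\<close> by force
  moreover have "a \<in> {a..b/m}" "b/m \<in> {a..b/m}" "1 - s \<in> {0..1}"
    using assms \<open>b \<le> b/m\<close> by auto
  ultimately show ?thesis
    using h unfolding harm_alpha_m_convex_on_def by metis
qed

theorem theorem5:
  fixes f :: "real \<Rightarrow> real" and I :: "real set"
    and m \<alpha> q \<theta> a b :: real
  assumes "is_interval I" and "I \<subseteq> {0<..}"
    and "\<forall>x\<in>interior I. f differentiable (at x)"
    and "0 < m" and "m \<le> 1" and "0 \<le> \<alpha>" and "\<alpha> \<le> 1" and "1 \<le> q" and "0 < \<theta>"
    and "a < b" and "a \<in> interior I" and "b / m \<in> interior I"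
    and "deriv f absolutely_integrable_on {a..b}"
    and "harm_alpha_m_convex_on {a..b/m} \<alpha> m (\<lambda>x. \<bar>deriv f x\<bar> powr q)"
  shows "\<bar>I_f f \<theta> a b\<bar> \<le> a * b * (b - a) / 2 * C1 \<theta> a b powr (1 - 1/q)
           * (C2 \<theta> \<alpha> a b * \<bar>deriv f a\<bar> powr q + m * C3 \<theta> \<alpha> a b * \<bar>deriv f (b/m)\<bar> powr q) powr (1/q)"
proof -
  have "0 < a"
    using assms(2,11) interior_subset by fastforce
  have "b \<le> b / m"
    using \<open>0 < a\<close> assms(4,5,10) by (simp add: field_simps)
  then have "{a..b} \<subseteq> interior I"
    using is_interval_interior_contains[OF assms(1,11,12)] by auto
  then have "\<And>x. x \<in> {a..b} \<Longrightarrow> f differentiable (at x)"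
    using assms(3) by blast
  then have der: "\<And>x. x \<in> {a..b} \<Longrightarrow> (f has_real_derivative deriv f x) (at x)"
    using DERIV_deriv_iff_real_differentiable by blast
  note bound = abs_I_f_le_integral_weight[OF \<open>0 < a\<close> assms(10,9) der assms(13)]
  let ?P = "\<lambda>s. rpow (1 - s) \<alpha> * \<bar>deriv f a\<bar> powr q + m * (1 - rpow (1 - s) \<alpha>) * \<bar>deriv f (b/m)\<bar> powr q"
  have "integral {0..1} (\<lambda>s. weight \<theta> a b s * \<bar>deriv f (harm_path a b s)\<bar>)
        \<le> C1 \<theta> a b powr (1 - 1/q)
          * (C2 \<theta> \<alpha> a b * \<bar>deriv f a\<bar> powr q + m * C3 \<theta> \<alpha> a b * \<bar>deriv f (b/m)\<bar> powr q) powr (1/q)"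
  proof (rule integral_weighted_le_powr_mean[where P = ?P])
    show "(weight \<theta> a b has_integral C1 \<theta> a b) {0..1}"
      using \<open>0 < a\<close> assms(10,9) by (rule has_integral_weight)
    show "((\<lambda>s. weight \<theta> a b s * ?P s) has_integral
            C2 \<theta> \<alpha> a b * \<bar>deriv f a\<bar> powr q + m * C3 \<theta> \<alpha> a b * \<bar>deriv f (b/m)\<bar> powr q) {0..1}"
      using \<open>0 < a\<close> assms(10,9,6) by (rule has_integral_weight_convex_combination)
    show "\<bar>deriv f (harm_path a b s)\<bar> powr q \<le> ?P s" if "s \<in> {0..1}" for s
      using harm_alpha_m_convex_on_harm_path[OF assms(14) \<open>0 < a\<close> assms(10,4,5) that] by simp
  qed (use \<open>0 < a\<close> assms bound(1) C1_pos weight_nonneg in auto)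
  moreover have "0 \<le> a * b * (b - a) / 2"
    using \<open>0 < a\<close> assms(10) by simp
  ultimately show ?thesis
    using order_trans[OF bound(2) mult_left_mono] by (simp add: mult.assoc)
qed

end
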